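(* Let $n$ be even and let $N=(P,L)$ be a $6$-net of order $n$ with parallel classes $\Pi_0,\dots,\Pi_5$, and let $\mathcal R$ be a relation on $N$ of type $(\lambda_0,\dots,\lambda_5)$. Put $g_i=\frac n2-\lambda_i$ for $0\le i\le 5$. Then for every binary string $\mathbf b=(b_0,\dots,b_5)$ with an even number of ones, $$t_{\mathbf b}+t_{\bar{\mathbf b}}=\frac{1}{16}n^2+\frac14\sum_{0\le i<j\le 5}(-1)^{b_i+b_j}g_ig_j,$$ where $\bar{\mathbf b}$ is the bitwise complement of $\mathbf b$.
   Context: A $k$-net of order $n$ is a set $P$ of $n^2$ points together with a set $L$ of $kn$ lines (subsets of $P$), each line containing $n$ points and each point lying on $k$ lines, such that $L$ partitions into $k$ parallel classes $\Pi_0,\dots,\Pi_{k-1}$ of $n$ pairwise disjoint lines each, and any two lines from different parallel classes meet in exactly one point. A relation on a net is a set $\mathcal R\subseteq L$ of lines such that every point lies on an even number of lines of $\mathcal R$ (equivalently, the $\mathbb F_2$ incidence vectors of the lines in $\mathcal R$ sum to zero). Its type is $(\lambda_0,\dots,\lambda_{k-1})$ where $\lambda_i=|\mathcal R\cap\Pi_i|$. The type of a point $p$ is the binary string $\mathbf b\in\{0,1\}^k$ with $b_i=1$ iff the line of $\Pi_i$ through $p$ lies in $\mathcal R$; $t_{\mathbf b}$ denotes the number of points of type $\mathbf b$. *)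

theory Defs
  imports Complex_Main
begin

definition is_net :: "nat \<Rightarrow> nat \<Rightarrow> 'p set \<Rightarrow> 'p set set \<Rightarrow> (nat \<Rightarrow> 'p set set) \<Rightarrow> bool" where
  "is_net k n P L C \<longleftrightarrow>
     finite P \<and> card P = n^2 \<and>
     finite L \<and> card L = k * n \<and>
     (\<forall>l\<in>L. l \<subseteq> P \<and> card l = n) \<and>
     (\<forall>p\<in>P. card {l\<in>L. p \<in> l} = k) \<and>
     L = (\<Union>i<k. C i) \<and>
     (\<forall>i<k. card (C i) = n) \<and>
     (\<forall>i<k. \<forall>j<k. i \<noteq> j \<longrightarrow> C i \<inter> C j = {}) \<and>
     (\<forall>i<k. \<forall>l\<in>C i. \<forall>m\<in>C i. l \<noteq> m \<longrightarrow> l \<inter> m = {}) \<and>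
     (\<forall>i<k. \<forall>j<k. i \<noteq> j \<longrightarrow> (\<forall>l\<in>C i. \<forall>m\<in>C j. card (l \<inter> m) = 1))"

definition is_relation :: "'p set \<Rightarrow> 'p set set \<Rightarrow> 'p set set \<Rightarrow> bool" where
  "is_relation P L R \<longleftrightarrow> R \<subseteq> L \<and> (\<forall>p\<in>P. even (card {l\<in>R. p \<in> l}))"

definition rel_type :: "(nat \<Rightarrow> 'p set set) \<Rightarrow> 'p set set \<Rightarrow> nat \<Rightarrow> nat" where
  "rel_type C R i = card (R \<inter> C i)"

definition point_type :: "nat \<Rightarrow> (nat \<Rightarrow> 'p set set) \<Rightarrow> 'p set set \<Rightarrow> 'p \<Rightarrow> nat \<Rightarrow> bool" where
  "point_type k C R p i = (i < k \<and> (\<exists>l\<in>C i. p \<in> l \<and> l \<in> R))"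

text \<open>t_b: number of points of type b (b a binary string of length k, given as a
  function on indices 0..k-1; values at indices \<ge> k are ignored).\<close>
definition t_count :: "nat \<Rightarrow> 'p set \<Rightarrow> (nat \<Rightarrow> 'p set set) \<Rightarrow> 'p set set \<Rightarrow> (nat \<Rightarrow> bool) \<Rightarrow> nat" where
  "t_count k P C R b = card {p\<in>P. \<forall>i<k. point_type k C R p i = b i}"

end

theory Submission
  imports Defs
begin

text \<open>Give a line the sign \<open>-1\<close> if it belongs to the relation and \<open>+1\<close> otherwise, and let
  \<open>x\<^sub>i(p)\<close> be the sign of the line of \<open>\<Pi>\<^sub>i\<close> through \<open>p\<close>. For a point \<open>p\<close> put
  \<open>y\<^sub>i = (-1)\<^bsup>b\<^sub>i\<^esup> x\<^sub>i(p)\<close>. Since \<open>p\<close> lies on an even number of lines of the relation and \<open>b\<close>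
  has even weight, the number \<open>m\<close> of indices with \<open>y\<^sub>i = -1\<close> is even; \<open>p\<close> has type \<open>b\<close> or
  \<open>b\<close>-bar exactly when \<open>m \<in> {0, 6}\<close>, and as \<open>\<Sum>\<^sub>i\<^sub><\<^sub>j y\<^sub>i y\<^sub>j = ((6 - 2m)\<^sup>2 - 6)/2\<close> the indicator
  of this event is \<open>(1 + \<Sum>\<^sub>i\<^sub><\<^sub>j y\<^sub>i y\<^sub>j)/16\<close>. Summing over all points, \<open>\<Sum>\<^sub>p x\<^sub>i(p) x\<^sub>j(p)\<close>
  factors for \<open>i \<noteq> j\<close>, because the two lines through \<open>p\<close> identify \<open>P\<close> with \<open>\<Pi>\<^sub>i \<times> \<Pi>\<^sub>j\<close>,
  and each factor is \<open>n - 2\<lambda>\<^sub>i = 2g\<^sub>i\<close>.\<close>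

definition bool_sign :: "bool \<Rightarrow> real" where
  "bool_sign x = (if x then -1 else 1)"

lemma bool_sign_eq_power: "bool_sign x = (-1) ^ of_bool x"
  by (simp add: bool_sign_def)

lemma bool_sign_mult: "bool_sign x * bool_sign y = bool_sign (x \<noteq> y)"
  by (simp add: bool_sign_def)

lemma bool_sign_square: "bool_sign x * bool_sign x = 1"
  by (simp add: bool_sign_def)

lemma sum_bool_sign:
  assumes "finite A"
  shows "(\<Sum>x\<in>A. bool_sign (Q x)) = real (card A) - 2 * real (card {x\<in>A. Q x})"
proof -
  have "(\<Sum>x\<in>A. bool_sign (Q x)) = (\<Sum>x\<in>A. 1 - 2 * of_bool (Q x))"
    by (intro sum.cong) (auto simp: bool_sign_def)
  also have "\<dots> = real (card A) - 2 * real (card {x\<in>A. Q x})"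
    using sum.inter_filter[OF assms, of "\<lambda>_. 1::real" Q]
    by (simp add: sum_subtractf sum_distrib_left of_bool_def)
  finally show ?thesis .
qed

lemma prod_bool_sign:
  assumes "finite A"
  shows "(\<Prod>x\<in>A. bool_sign (Q x)) = (-1) ^ card {x\<in>A. Q x}"
proof -
  have "(\<Prod>x\<in>A. bool_sign (Q x)) = (\<Prod>x\<in>A \<inter> {x. Q x}. -1) * (\<Prod>x\<in>A \<inter> - {x. Q x}. 1)"
    unfolding bool_sign_def by (rule prod.If_cases[OF assms])
  also have "A \<inter> {x. Q x} = {x\<in>A. Q x}" by auto
  finally show ?thesis by simp
qed

lemma Collect_conj_lessThan: "{i\<in>{..<k::nat}. Q i} = {i. i < k \<and> Q i}"
  by auto

lemma even_card_neq_if_even_cards: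
  fixes k :: nat
  assumes "even (card {i. i < k \<and> a i})" "even (card {i. i < k \<and> b i})"
  shows "even (card {i. i < k \<and> a i \<noteq> b i})"
proof -
  have sign_prod: "(\<Prod>i<k. bool_sign (Q i)) = (-1) ^ card {i. i < k \<and> Q i}" for Q
    using prod_bool_sign[of "{..<k}" Q, OF finite_lessThan] unfolding Collect_conj_lessThan .
  have "(-1::real) ^ card {i. i < k \<and> a i \<noteq> b i} = (\<Prod>i<k. bool_sign (a i) * bool_sign (b i))"
    by (simp only: sign_prod[symmetric] bool_sign_mult)
  also have "\<dots> = 1"
    using assms by (simp add: prod.distrib sign_prod)
  finally show ?thesis
    by (simp add: minus_one_power_iff split: if_splits)
qed

lemma sum_pair_products:
  fixes y :: "nat \<Rightarrow> 'a::comm_ring_1"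
  shows "2 * (\<Sum>i<k. \<Sum>j\<in>{i<..<k}. y i * y j) = (\<Sum>i<k. y i)^2 - (\<Sum>i<k. y i * y i)"
proof (induction k)
  case (Suc k)
  have "{i<..<Suc k} = insert k {i<..<k}" if "i < k" for i
    using that by auto
  moreover have "{k<..<Suc k} = {}" by auto
  ultimately have "(\<Sum>i<Suc k. \<Sum>j\<in>{i<..<Suc k}. y i * y j)
      = (\<Sum>i<k. \<Sum>j\<in>{i<..<k}. y i * y j) + (\<Sum>i<k. y i) * y k"
    by (simp add: sum.distrib sum_distrib_right)
  then have "2 * (\<Sum>i<Suc k. \<Sum>j\<in>{i<..<Suc k}. y i * y j)
      = (\<Sum>i<k. y i)^2 - (\<Sum>i<k. y i * y i) + 2 * (\<Sum>i<k. y i) * y k"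
    by (simp add: Suc.IH distrib_left mult.assoc)
  also have "\<dots> = (\<Sum>i<Suc k. y i)^2 - (\<Sum>i<Suc k. y i * y i)"
    by (simp add: power2_eq_square algebra_simps)
  finally show ?case .
qed simp

lemma sum_swap_nested:
  "(\<Sum>p\<in>P. \<Sum>i\<in>I. \<Sum>j\<in>J i. h i j p) = (\<Sum>i\<in>I. \<Sum>j\<in>J i. \<Sum>p\<in>P. h i j p)"
proof -
  have "(\<Sum>p\<in>P. \<Sum>i\<in>I. \<Sum>j\<in>J i. h i j p) = (\<Sum>i\<in>I. \<Sum>p\<in>P. \<Sum>j\<in>J i. h i j p)"
    by (rule sum.swap)
  also have "\<dots> = (\<Sum>i\<in>I. \<Sum>j\<in>J i. \<Sum>p\<in>P. h i j p)"
    by (rule sum.cong[OF refl], rule sum.swap)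
  finally show ?thesis .
qed

lemma indicator_type_or_complement:
  assumes "even (card {i. i < 6 \<and> a i})" "even (card {i. i < 6 \<and> b i})"
  shows "of_bool (\<forall>i<6. a i = b i) + of_bool (\<forall>i<6. a i = (\<not> b i)) =
    (1 + (\<Sum>i<6. \<Sum>j\<in>{i<..<6::nat}.
       bool_sign (b i) * bool_sign (b j) * bool_sign (a i) * bool_sign (a j))) / 16"
proof -
  define y where "y i = bool_sign (a i \<noteq> b i)" for i
  define D where "D = {i. i < (6::nat) \<and> a i \<noteq> b i}"
  have "even (card D)" "card D \<le> 6"
    using even_card_neq_if_even_cards[OF assms] card_mono[of "{..<6}" D]
    by (auto simp: D_def)
  moreover have "m = 0 \<or> m = 2 \<or> m = 4 \<or> m = 6" if "even m" "m \<le> 6" for m :: nat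
    using that by presburger
  ultimately have "card D = 0 \<or> card D = 2 \<or> card D = 4 \<or> card D = 6"
    by simp
  have "(\<Sum>i<6. y i) = 6 - 2 * real (card D)"
    using sum_bool_sign[of "{..<6::nat}" "\<lambda>i. a i \<noteq> b i"]
    by (simp add: y_def D_def Collect_conj_lessThan)
  then have pair_sum: "(\<Sum>i<6. \<Sum>j\<in>{i<..<6}. y i * y j) = ((6 - 2 * real (card D))^2 - 6) / 2"
    using sum_pair_products[of y 6] by (simp add: y_def bool_sign_square)
  have "bool_sign (b i) * bool_sign (b j) * bool_sign (a i) * bool_sign (a j) = y i * y j" for i j
    by (simp add: y_def bool_sign_def)
  then have signs: "(\<Sum>i<6. \<Sum>j\<in>{i<..<6::nat}.
      bool_sign (b i) * bool_sign (b j) * bool_sign (a i) * bool_sign (a j)) = (\<Sum>i<6. \<Sum>j\<in>{i<..<6}. y i * y j)"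
    by simp
  have equal: "(\<forall>i<6. a i = b i) \<longleftrightarrow> card D = 0"
    by (auto simp: D_def)
  have "D \<subseteq> {..<6}" by (auto simp: D_def)
  then have "card D = 6 \<longleftrightarrow> D = {..<6}"
    using card_subset_eq[OF finite_lessThan] by auto
  then have complement: "(\<forall>i<6. a i = (\<not> b i)) \<longleftrightarrow> card D = 6"
    by (auto simp: D_def)
  show ?thesis
    unfolding signs pair_sum equal complement
    using \<open>card D = 0 \<or> card D = 2 \<or> card D = 4 \<or> card D = 6\<close>
    by (elim disjE) (simp_all add: power2_eq_square)
qed

text \<open>The axioms of \<^const>\<open>is_net\<close> that the argument needs.\<close>
locale net =
  fixes k n :: nat and P :: "'p set" and C :: "nat \<Rightarrow> 'p set set"
  assumes finite_points: "finite P"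
    and card_points: "card P = n\<^sup>2"
    and finite_class: "i < k \<Longrightarrow> finite (C i)"
    and card_class: "i < k \<Longrightarrow> card (C i) = n"
    and line_subset: "i < k \<Longrightarrow> l \<in> C i \<Longrightarrow> l \<subseteq> P"
    and card_line: "i < k \<Longrightarrow> l \<in> C i \<Longrightarrow> card l = n"
    and classes_disjoint: "i < k \<Longrightarrow> j < k \<Longrightarrow> i \<noteq> j \<Longrightarrow> C i \<inter> C j = {}"
    and parallel_disjoint: "i < k \<Longrightarrow> l \<in> C i \<Longrightarrow> m \<in> C i \<Longrightarrow> l \<noteq> m \<Longrightarrow> l \<inter> m = {}"
    and card_meet: "i < k \<Longrightarrow> j < k \<Longrightarrow> i \<noteq> j \<Longrightarrow> l \<in> C i \<Longrightarrow> m \<in> C j \<Longrightarrow> card (l \<inter> m) = 1"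

lemma net_if_is_net:
  assumes "is_net k n P L C"
  shows "net k n P C"
proof -
  have L: "L = (\<Union>i<k. C i)"
    using assms unfolding is_net_def by simp
  have "finite P" "card P = n\<^sup>2" "finite (\<Union>i<k. C i)"
    and lines: "\<forall>l\<in>(\<Union>i<k. C i). l \<subseteq> P \<and> card l = n"
    and card_classes: "\<forall>i<k. card (C i) = n"
    and disjoint_classes: "\<forall>i<k. \<forall>j<k. i \<noteq> j \<longrightarrow> C i \<inter> C j = {}"
    and parallel: "\<forall>i<k. \<forall>l\<in>C i. \<forall>m\<in>C i. l \<noteq> m \<longrightarrow> l \<inter> m = {}"
    and meet: "\<forall>i<k. \<forall>j<k. i \<noteq> j \<longrightarrow> (\<forall>l\<in>C i. \<forall>m\<in>C j. card (l \<inter> m) = 1)"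
    using assms[unfolded is_net_def L] by simp_all
  have class_lines: "C i \<subseteq> (\<Union>i<k. C i)" if "i < k" for i
    using that by blast
  show ?thesis
  proof (rule net.intro)
    show "finite P" "card P = n\<^sup>2" by fact+
    show "finite (C i)" if "i < k" for i
      using finite_subset[OF class_lines[OF that] \<open>finite (\<Union>i<k. C i)\<close>] .
    show "card (C i) = n" if "i < k" for i
      using card_classes that by blast
    show "l \<subseteq> P" "card l = n" if "i < k" "l \<in> C i" for i l
      using lines class_lines[OF that(1)] that(2) by blast+
    show "C i \<inter> C j = {}" if "i < k" "j < k" "i \<noteq> j" for i j
      using disjoint_classes that by blast
    show "l \<inter> m = {}" if "i < k" "l \<in> C i" "m \<in> C i" "l \<noteq> m" for i l m
      using parallel that by blast
    show "card (l \<inter> m) = 1" if "i < k" "j < k" "i \<noteq> j" "l \<in> C i" "m \<in> C j" for i j l m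
      using meet that by blast
  qed
qed

definition line_through :: "(nat \<Rightarrow> 'p set set) \<Rightarrow> nat \<Rightarrow> 'p \<Rightarrow> 'p set" where
  "line_through C i p = (THE l. l \<in> C i \<and> p \<in> l)"

context net
begin

lemma finite_line: "i < k \<Longrightarrow> l \<in> C i \<Longrightarrow> finite l"
  using line_subset finite_points finite_subset by blast

lemma class_covers_points:
  assumes "i < k"
  shows "\<Union>(C i) = P"
proof (rule card_subset_eq[OF finite_points])
  show "\<Union>(C i) \<subseteq> P"
    using line_subset[OF assms] by blast
  have "pairwise disjnt (C i)"
    using parallel_disjoint[OF assms] unfolding pairwise_def disjnt_def by blast
  then have "card (\<Union>(C i)) = (\<Sum>l\<in>C i. card l)"
    using card_Union_disjoint finite_line[OF assms] by blast
  also have "\<dots> = card P"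
    using card_line[OF assms] card_class[OF assms] card_points by (simp add: power2_eq_square)
  finally show "card (\<Union>(C i)) = card P" .
qed

lemma line_through_eq:
  assumes "i < k" "l \<in> C i" "p \<in> l"
  shows "line_through C i p = l"
  unfolding line_through_def
proof (rule the_equality)
  fix m assume "m \<in> C i \<and> p \<in> m"
  then show "m = l"
    using parallel_disjoint[OF assms(1)] assms(2,3) by blast
qed (use assms in simp)

lemma line_through_in_class:
  assumes "i < k" "p \<in> P"
  shows "line_through C i p \<in> C i" "p \<in> line_through C i p"
proof -
  obtain l where "l \<in> C i" "p \<in> l"
    using class_covers_points[OF assms(1)] assms(2) by blast
  then show "line_through C i p \<in> C i" "p \<in> line_through C i p"
    using line_through_eq[OF assms(1)] by auto
qed

lemma point_type_iff_line_through:
  assumes "i < k" "p \<in> P"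
  shows "point_type k C R p i \<longleftrightarrow> line_through C i p \<in> R"
  using line_through_in_class[OF assms] line_through_eq[OF assms(1)] assms(1)
  unfolding point_type_def by blast

lemma even_card_point_type:
  assumes "R \<subseteq> (\<Union>i<k. C i)" "even (card {l\<in>R. p \<in> l})" "p \<in> P"
  shows "even (card {i. i < k \<and> point_type k C R p i})"
proof -
  let ?I = "{i. i < k \<and> point_type k C R p i}" and ?line = "\<lambda>i. line_through C i p"
  have "inj_on ?line ?I"
  proof (rule inj_onI)
    fix i j assume "i \<in> ?I" "j \<in> ?I" and same_line: "?line i = ?line j"
    then have "i < k" "j < k" by auto
    moreover have "?line i \<in> C i \<inter> C j"
      using line_through_in_class[OF \<open>i < k\<close> assms(3)] line_through_in_class[OF \<open>j < k\<close> assms(3)]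
        same_line by simp
    ultimately show "i = j"
      using classes_disjoint by blast
  qed
  moreover have "?line ` ?I = {l\<in>R. p \<in> l}"
  proof
    show "?line ` ?I \<subseteq> {l\<in>R. p \<in> l}"
      using point_type_iff_line_through line_through_in_class assms(3) by auto
    show "{l\<in>R. p \<in> l} \<subseteq> ?line ` ?I"
    proof
      fix l assume l: "l \<in> {l\<in>R. p \<in> l}"
      then obtain i where "i < k" "l \<in> C i"
        using assms(1) by blast
      with l show "l \<in> ?line ` ?I"
        using line_through_eq point_type_iff_line_through assms(3) by (auto intro!: image_eqI)
    qed
  qed
  ultimately have "card ?I = card {l\<in>R. p \<in> l}"
    using card_image by fastforce
  then show ?thesis
    using assms(2) by simp
qed

lemma bij_betw_line_pair:
  assumes "i < k" "j < k" "i \<noteq> j"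
  shows "bij_betw (\<lambda>p. (line_through C i p, line_through C j p)) P (C i \<times> C j)"
proof (rule bij_betw_imageI)
  show "inj_on (\<lambda>p. (line_through C i p, line_through C j p)) P"
  proof (rule inj_onI)
    fix p q assume "p \<in> P" "q \<in> P"
      and "(line_through C i p, line_through C j p) = (line_through C i q, line_through C j q)"
    then have "{p, q} \<subseteq> line_through C i p \<inter> line_through C j p"
      "card (line_through C i p \<inter> line_through C j p) = 1"
      using line_through_in_class assms card_meet by auto
    then show "p = q"
      by (metis card_1_singletonE insert_subset singletonD)
  qed
  show "(\<lambda>p. (line_through C i p, line_through C j p)) ` P = C i \<times> C j"
  proof
    show "(\<lambda>p. (line_through C i p, line_through C j p)) ` P \<subseteq> C i \<times> C j"
      using line_through_in_class assms by auto
    show "C i \<times> C j \<subseteq> (\<lambda>p. (line_through C i p, line_through C j p)) ` P"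
    proof clarify
      fix l m assume lm: "l \<in> C i" "m \<in> C j"
      then obtain p where "l \<inter> m = {p}"
        using card_meet[OF assms] card_1_singletonE by blast
      then have "p \<in> l" "p \<in> m" by auto
      then have "p \<in> P" "line_through C i p = l" "line_through C j p = m"
        using line_subset[OF assms(1) lm(1)] line_through_eq[OF assms(1) lm(1)]
          line_through_eq[OF assms(2) lm(2)] by auto
      then show "(l, m) \<in> (\<lambda>p. (line_through C i p, line_through C j p)) ` P"
        by force
    qed
  qed
qed

lemma sum_class_sign:
  assumes "i < k"
  shows "(\<Sum>l\<in>C i. bool_sign (l \<in> R)) = real n - 2 * real (rel_type C R i)"
proof -
  have "{l\<in>C i. l \<in> R} = R \<inter> C i" by auto
  then show ?thesis
    using finite_class[OF assms] card_class[OF assms] by (simp add: sum_bool_sign rel_type_def)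
qed

lemma sum_point_type_sign_products:
  assumes "i < k" "j < k" "i \<noteq> j"
  shows "(\<Sum>p\<in>P. bool_sign (point_type k C R p i) * bool_sign (point_type k C R p j))
     = (real n - 2 * real (rel_type C R i)) * (real n - 2 * real (rel_type C R j))"
proof -
  have "(\<Sum>p\<in>P. bool_sign (point_type k C R p i) * bool_sign (point_type k C R p j))
      = (\<Sum>p\<in>P. bool_sign (line_through C i p \<in> R) * bool_sign (line_through C j p \<in> R))"
    using assms by (simp add: point_type_iff_line_through)
  also have "\<dots> = (\<Sum>(l, m)\<in>C i \<times> C j. bool_sign (l \<in> R) * bool_sign (m \<in> R))"
    using sum.reindex_bij_betw[OF bij_betw_line_pair[OF assms],
        where g = "\<lambda>(l, m). bool_sign (l \<in> R) * bool_sign (m \<in> R)"] by simp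
  also have "\<dots> = (\<Sum>l\<in>C i. bool_sign (l \<in> R)) * (\<Sum>m\<in>C j. bool_sign (m \<in> R))"
    by (simp add: sum.cartesian_product[symmetric] sum_product)
  finally show ?thesis
    using assms by (simp add: sum_class_sign)
qed

end

lemma t_count_type_or_complement:
  assumes "net 6 n P C" "R \<subseteq> (\<Union>i<6. C i)" "\<And>p. p \<in> P \<Longrightarrow> even (card {l\<in>R. p \<in> l})"
    and "even (card {i. i < 6 \<and> b i})"
  shows "real (t_count 6 P C R b + t_count 6 P C R (\<lambda>i. \<not> b i)) =
    (real (card P) + (\<Sum>i<6. \<Sum>j\<in>{i<..<6}. bool_sign (b i) * bool_sign (b j) *
       (\<Sum>p\<in>P. bool_sign (point_type 6 C R p i) * bool_sign (point_type 6 C R p j)))) / 16"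
proof -
  interpret net 6 n P C by fact
  let ?x = "\<lambda>i p. bool_sign (point_type 6 C R p i)"
  have t_count_sum: "real (t_count 6 P C R c) = (\<Sum>p\<in>P. of_bool (\<forall>i<6. point_type 6 C R p i = c i))"
    for c
    using finite_points by (simp add: t_count_def Int_def)
  have pointwise: "of_bool (\<forall>i<6. point_type 6 C R p i = b i) + of_bool (\<forall>i<6. point_type 6 C R p i = (\<not> b i))
      = (1 + (\<Sum>i<6. \<Sum>j\<in>{i<..<6}. bool_sign (b i) * bool_sign (b j) * ?x i p * ?x j p)) / 16"
    if "p \<in> P" for p
    using indicator_type_or_complement[OF even_card_point_type[OF assms(2) assms(3)[OF that] that] assms(4)] .
  have "real (t_count 6 P C R b + t_count 6 P C R (\<lambda>i. \<not> b i))
      = (\<Sum>p\<in>P. (1 + (\<Sum>i<6. \<Sum>j\<in>{i<..<6}. bool_sign (b i) * bool_sign (b j) * ?x i p * ?x j p)) / 16)"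
    unfolding of_nat_add t_count_sum sum.distrib[symmetric] using pointwise by (rule sum.cong[OF refl])
  then show ?thesis
    by (simp add: sum_divide_distrib[symmetric] sum.distrib sum_swap_nested sum_distrib_left mult.assoc)
qed

theorem mainTheorem1:
  fixes n :: nat and P :: "'p set" and L :: "'p set set" and C :: "nat \<Rightarrow> 'p set set"
    and R :: "'p set set" and b :: "nat \<Rightarrow> bool"
  assumes "even n"
    and "is_net 6 n P L C"
    and "is_relation P L R"
    and "even (card {i. i < 6 \<and> b i})"
  shows "real (t_count 6 P C R b + t_count 6 P C R (\<lambda>i. \<not> b i)) =
    real n ^ 2 / 16 + 1/4 * (\<Sum>i<6. \<Sum>j\<in>{i<..<6}.
       (-1) ^ (of_bool (b i) + of_bool (b j)) *
       (real n / 2 - real (rel_type C R i)) * (real n / 2 - real (rel_type C R j)))"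
proof -
  interpret net 6 n P C
    using net_if_is_net[OF assms(2)] .
  have "L = (\<Union>i<6. C i)"
    using assms(2) unfolding is_net_def by simp
  then have R_lines: "R \<subseteq> (\<Union>i<6. C i)" and R_even: "\<And>p. p \<in> P \<Longrightarrow> even (card {l\<in>R. p \<in> l})"
    using assms(3) unfolding is_relation_def by auto
  let ?g = "\<lambda>i. real n / 2 - real (rel_type C R i)"
  have pair_sums: "(\<Sum>p\<in>P. bool_sign (point_type 6 C R p i) * bool_sign (point_type 6 C R p j))
      = 4 * (?g i * ?g j)" if "i < 6" "j \<in> {i<..<6}" for i j
    using sum_point_type_sign_products[of i j R] that by (simp add: field_simps)
  have "real (t_count 6 P C R b + t_count 6 P C R (\<lambda>i. \<not> b i))
      = (real n ^ 2 + 4 * (\<Sum>i<6. \<Sum>j\<in>{i<..<6}. bool_sign (b i) * bool_sign (b j) * (?g i * ?g j))) / 16"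
    using t_count_type_or_complement[OF net_axioms R_lines R_even assms(4)]
    by (simp add: card_points pair_sums sum_distrib_left mult.left_commute)
  also have "\<dots> = real n ^ 2 / 16 + 1/4 * (\<Sum>i<6. \<Sum>j\<in>{i<..<6}.
       (-1) ^ (of_bool (b i) + of_bool (b j)) * ?g i * ?g j)"
    by (simp add: bool_sign_eq_power power_add mult.assoc add_divide_distrib)
  finally show ?thesis .
qed

end
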